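(* Let $\lambda>0$ and let $\{c_k\}_{k\ge1}$ be i.i.d. random variables whose common distribution is absolutely continuous on $[0,1]$ with almost everywhere positive and uniformly bounded density. Let $l_k=e^{-\lambda k}$. Then, almost surely, assumptions (A1), (A2), (A3) below are satisfied.
   Context: Notation: $\mathcal{A}_n=\{n,\dots,2n-1\}$, $\mathcal{A}_{n,q}=\mathcal{A}_n\cup\mathcal{A}_{2n}\cup\cdots\cup\mathcal{A}_{2^qn}$. (A1) There is $\phi\in L^1([0,1],dx)$, $\phi>0$ a.e., with $\frac{1}{\#\mathcal{A}_n}\sum_{k\in\mathcal{A}_n}f(c_k)\to\int_0^1 f\phi\,dx$ for every $f\in C([0,1])$. There is a sequence of integers $q(n)\to\infty$ such that: (A2) for every $\varepsilon>0$ there is $\delta>0$ such that for all large $n$ and all $n',n''\in\{n,2n,\dots,2^{q(n)}n\}$, $\frac{1}{\#(\mathcal{A}_{n'}\times\mathcal{A}_{n''})}\sum_{i\in\mathcal{A}_{n'},j\in\mathcal{A}_{n''},\,i\neq j,\,|c_i-c_j|<\delta}(-\log|c_i-c_j|)<\varepsilon$; (A3) for every $\varepsilon>0$, for all large $n$ and all $i\ne j$ in $\mathcal{A}_{n,q(n)}$, $\frac{l_i+l_j}{2|c_i-c_j|}<\varepsilon$. *)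

theory Defs
  imports "HOL-Probability.Probability"
begin

definition blockA :: "nat \<Rightarrow> nat set" where
  "blockA n = {n..<2*n}"

definition blockAq :: "nat \<Rightarrow> nat \<Rightarrow> nat set" where
  "blockAq n q = (\<Union>j\<in>{0..q}. blockA (2^j * n))"

definition assumptionA1 :: "(nat \<Rightarrow> real) \<Rightarrow> bool" where
  "assumptionA1 c \<longleftrightarrow>
     (\<exists>\<phi>::real \<Rightarrow> real.
        set_integrable lborel {0..1} \<phi> \<and>
        (AE x in lborel. x \<in> {0..1} \<longrightarrow> \<phi> x > 0) \<and>
        (\<forall>f. continuous_on {0..1} f \<longrightarrow>
           (\<lambda>n. (1 / real (card (blockA n))) * (\<Sum>k\<in>blockA n. f (c k)))
             \<longlonglongrightarrow> (LINT x:{0..1}|lborel. f x * \<phi> x)))"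

definition assumptionA2 :: "(nat \<Rightarrow> nat) \<Rightarrow> (nat \<Rightarrow> real) \<Rightarrow> bool" where
  "assumptionA2 q c \<longleftrightarrow>
     (\<forall>\<epsilon>>0. \<exists>\<delta>>0. \<forall>\<^sub>F n in sequentially.
        \<forall>n'\<in>{2^j * n | j. j \<le> q n}. \<forall>n''\<in>{2^j * n | j. j \<le> q n}.
          (1 / real (card (blockA n' \<times> blockA n''))) *
            (\<Sum>(i,j)\<in>{(i,j). i \<in> blockA n' \<and> j \<in> blockA n'' \<and> i \<noteq> j \<and> \<bar>c i - c j\<bar> < \<delta>}.
               - ln \<bar>c i - c j\<bar>) < \<epsilon>)"

definition assumptionA3 :: "(nat \<Rightarrow> nat) \<Rightarrow> (nat \<Rightarrow> real) \<Rightarrow> (nat \<Rightarrow> real) \<Rightarrow> bool" where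
  "assumptionA3 q c l \<longleftrightarrow>
     (\<forall>\<epsilon>>0. \<forall>\<^sub>F n in sequentially.
        \<forall>i\<in>blockAq n (q n). \<forall>j\<in>blockAq n (q n). i \<noteq> j \<longrightarrow>
          (l i + l j) / (2 * \<bar>c i - c j\<bar>) < \<epsilon>)"

end

theory Submission
  imports Defs "HOL-Real_Asymp.Real_Asymp"
begin

(*
  Two almost sure regularity properties of the centres c_k are obtained from the first
  Borel-Cantelli lemma, each from a summable bound on failure probabilities.

  Separation: for fixed Q, a union bound over the fewer than (2^(Q+1) n)^2 pairs of indices in
  [n, 2^(Q+1) n), each pair being closer than n^-4 with probability at most 2 C n^-4 (C bounds
  the density), shows that eventually all these centres are n^-4 apart.  A diagonal argument
  lets q(n) tend to infinity so slowly that this holds on A_{n,q(n)}.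

  Equidistribution: Hoeffding's inequality makes block means of a bounded function concentrate
  with exponentially small failure probability.  This gives convergence of the block means of
  the countably many polynomials with rational coefficients, hence (A1) by Weierstrass
  approximation; and it bounds by (C+1) n 2^-m the number of centres of a block lying in any
  dyadic cell of side 2^-m with 16^m <= n.

  (A3) follows from separation because exp (-lam n) beats n^4.  For (A2), the pairs at distance
  less than 2^-m number O(n' n'' 2^-m) by the cell bound, so counting -ln of the distance layer
  by layer gives O(m0 2^-m0) for the pairs closer than 2^-m0; below the finest controlled
  scale 2^-M, M ~ (log2 n)/4, separation caps -ln of the distance by 4 ln n.
*)

lemma eventually_sequentially_diagonal:
  fixes P :: "nat \<Rightarrow> nat \<Rightarrow> bool"
  assumes "\<And>k. eventually (P k) sequentially"
  shows "\<exists>q. filterlim q at_top sequentially \<and> eventually (\<lambda>n. P (q n) n) sequentially"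
proof -
  have "\<forall>k. \<exists>N. \<forall>n\<ge>N. P k n"
    using assms by (simp add: eventually_sequentially)
  then obtain N where N: "\<And>k n. n \<ge> N k \<Longrightarrow> P k n"
    by metis
  define S where "S n = {k. k \<le> n \<and> (\<forall>k'\<le>k. N k' \<le> n)}" for n
  define q where "q n = Max (S n)" for n
  have finite_S: "finite (S n)" for n
    unfolding S_def by simp
  have q_in_S: "q n \<in> S n" if "n \<ge> N 0" for n
    unfolding q_def using that finite_S by (intro Max_in) (auto simp: S_def)
  show ?thesis
  proof (intro exI conjI)
    show "eventually (\<lambda>n. P (q n) n) sequentially"
      using q_in_S by (intro eventually_sequentiallyI[of "N 0"] N) (auto simp: S_def)
    show "filterlim q at_top sequentially"
      unfolding filterlim_at_top
    proof
      fix k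
      show "eventually (\<lambda>n. k \<le> q n) sequentially"
      proof (intro eventually_sequentiallyI[of "max k (Max (N ` {..k}))"])
        fix n assume n: "max k (Max (N ` {..k})) \<le> n"
        have "N k' \<le> n" if "k' \<le> k" for k'
          using n Max_ge[of "N ` {..k}" "N k'"] that by auto
        then have "k \<in> S n"
          using n by (auto simp: S_def)
        then show "k \<le> q n"
          unfolding q_def using finite_S by (intro Max_ge)
      qed
    qed
  qed
qed

lemma neg_ln_le_card_dyadic:
  fixes t :: real
  assumes t: "t > 0" and tM: "1 / 2^M \<le> t"
  shows "- ln t \<le> ln 2 * (real m0 + real (card {m \<in> {m0..<M}. t < 1 / 2^m}))"
proof -
  define r where "r = - log 2 t"
  define k where "k = nat \<lceil>r\<rceil>"
  have "log 2 (1 / 2^M) \<le> log 2 t"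
    using tM t by (subst log_le_cancel_iff) auto
  then have "r \<le> real M"
    by (simp add: r_def log_divide)
  then have kM: "k \<le> M"
    unfolding k_def by (simp add: nat_le_iff ceiling_le_iff)
  have "{m0..<k} \<subseteq> {m \<in> {m0..<M}. t < 1 / 2^m}"
  proof
    fix m assume m: "m \<in> {m0..<k}"
    then have "m < nat \<lceil>r\<rceil>"
      unfolding k_def by simp
    then have "int m < \<lceil>r\<rceil>"
      by linarith
    then have "log 2 t < - real m"
      by (simp add: less_ceiling_iff r_def)
    then have "t < 2 powr (- real m)"
      using t by (simp add: r_def log_less_iff)
    then show "m \<in> {m \<in> {m0..<M}. t < 1 / 2^m}"
      using m kM by (simp add: powr_minus powr_realpow divide_inverse)
  qed
  then have "card {m0..<k} \<le> card {m \<in> {m0..<M}. t < 1 / 2^m}"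
    by (intro card_mono) auto
  then have "k \<le> m0 + card {m \<in> {m0..<M}. t < 1 / 2^m}"
    by simp
  moreover have "r \<le> real k"
    unfolding k_def by (rule real_nat_ceiling_ge)
  ultimately have "r \<le> real m0 + real (card {m \<in> {m0..<M}. t < 1 / 2^m})"
    by linarith
  moreover have "- ln t = ln 2 * r"
    using t by (simp add: r_def log_def)
  ultimately show ?thesis
    by simp
qed

lemma sum_inverse_power2_le: "(\<Sum>m\<in>{m0..<M}. 1 / 2^m :: real) \<le> 2 / 2^m0"
proof -
  have geometric: "(\<Sum>m\<in>{m0..<m0+k}. 1 / 2^m :: real) = 2 / 2^m0 - 2 / 2^(m0+k)" for k
  proof (induction k)
    case (Suc k)
    have "(2::real) / 2^(m0 + Suc k) = 1 / 2^(m0+k)"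
      by simp
    then show ?case
      using Suc by (simp add: sum.atLeastLessThan_Suc)
  qed simp
  show ?thesis
  proof (cases "m0 \<le> M")
    case True
    then obtain k where "M = m0 + k"
      using le_Suc_ex by blast
    then show ?thesis
      using geometric[of k] by simp
  qed simp
qed

lemma sum_neg_ln_le_dyadic_counts:
  fixes t :: "'a \<Rightarrow> real"
  assumes "finite P" and "K \<ge> 0"
    and lower: "\<And>p. p \<in> P \<Longrightarrow> 1 / 2^M \<le> t p"
    and upper: "\<And>p. p \<in> P \<Longrightarrow> t p < 1 / 2^m0"
    and count: "\<And>m. m0 \<le> m \<Longrightarrow> m < M \<Longrightarrow> real (card {p\<in>P. t p < 1 / 2^m}) \<le> K / 2^m"
  shows "(\<Sum>p\<in>P. - ln (t p)) \<le> ln 2 * K * (real m0 + 2) / 2^m0"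
proof -
  define layers where "layers p = {m \<in> {m0..<M}. t p < 1 / 2^m}" for p
  have t_pos: "t p > 0" if "p \<in> P" for p
    by (rule less_le_trans[OF _ lower[OF that]]) simp
  have card_P: "real (card P) \<le> K / 2^m0"
  proof (cases "m0 < M")
    case True
    have "{p\<in>P. t p < 1 / 2^m0} = P"
      using upper by auto
    then show ?thesis
      using count[of m0] True by simp
  next
    case False
    then have "(1::real) / 2^m0 \<le> 1 / 2^M"
      by (simp add: divide_simps power_increasing)
    have "p \<notin> P" for p
      using lower[of p] upper[of p] \<open>1 / 2^m0 \<le> 1 / 2^M\<close> by linarith
    then have "P = {}"
      by blast
    then show ?thesis
      using \<open>K \<ge> 0\<close> by simp
  qed
  have double_counting:
    "(\<Sum>p\<in>P. real (card (layers p))) = (\<Sum>m\<in>{m0..<M}. real (card {p\<in>P. t p < 1 / 2^m}))"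
  proof -
    have "(\<Sum>p\<in>P. real (card (layers p))) = (\<Sum>p\<in>P. \<Sum>m\<in>{m0..<M}. of_bool (t p < 1 / 2^m))"
      by (simp add: layers_def Int_def)
    also have "\<dots> = (\<Sum>m\<in>{m0..<M}. \<Sum>p\<in>P. of_bool (t p < 1 / 2^m))"
      by (rule sum.swap)
    also have "\<dots> = (\<Sum>m\<in>{m0..<M}. real (card {p\<in>P. t p < 1 / 2^m}))"
      using \<open>finite P\<close> by (simp add: Int_def)
    finally show ?thesis .
  qed
  have "(\<Sum>p\<in>P. - ln (t p)) \<le> (\<Sum>p\<in>P. ln 2 * (real m0 + real (card (layers p))))"
    unfolding layers_def using lower t_pos by (intro sum_mono neg_ln_le_card_dyadic)
  also have "\<dots> = ln 2 * (real m0 * real (card P) + (\<Sum>p\<in>P. real (card (layers p))))"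
    by (simp add: sum.distrib mult.commute flip: sum_distrib_left)
  also have "\<dots> = ln 2 * (real m0 * real (card P) + (\<Sum>m\<in>{m0..<M}. real (card {p\<in>P. t p < 1 / 2^m})))"
    by (simp only: double_counting)
  also have "\<dots> \<le> ln 2 * (real m0 * (K / 2^m0) + (\<Sum>m\<in>{m0..<M}. K * (1 / 2^m)))"
    using card_P count by (intro mult_left_mono add_mono sum_mono) auto
  also have "\<dots> \<le> ln 2 * (real m0 * (K / 2^m0) + K * (2 / 2^m0))"
    unfolding sum_distrib_left[symmetric]
    using \<open>K \<ge> 0\<close> sum_inverse_power2_le by (intro mult_left_mono add_mono order_refl) auto
  also have "\<dots> = ln 2 * K * (real m0 + 2) / 2^m0"
    by (simp add: field_simps)
  finally show ?thesis .
qed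

lemma summable_exp_neg_mult:
  assumes "\<kappa> > 0"
  shows "summable (\<lambda>n::nat. exp (- \<kappa> * real n))"
proof -
  have "(\<lambda>n::nat. exp (- \<kappa> * real n)) = (\<lambda>n. exp (- \<kappa>) ^ n)"
    by (simp add: exp_of_nat_mult[symmetric] mult.commute)
  then show ?thesis
    using assms by (simp add: summable_geometric)
qed

lemma tendsto_if_uniformly_approximable:
  fixes a :: "nat \<Rightarrow> real"
  assumes "\<And>\<eta>. \<eta> > 0 \<Longrightarrow> \<exists>b L'. b \<longlonglongrightarrow> L' \<and> (\<forall>n. \<bar>a n - b n\<bar> \<le> \<eta>) \<and> \<bar>L - L'\<bar> \<le> \<eta>"
  shows "a \<longlonglongrightarrow> L"
proof (rule tendstoI)
  fix \<epsilon> :: real assume "\<epsilon> > 0"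
  then obtain b L' where b: "b \<longlonglongrightarrow> L'" "\<And>n. \<bar>a n - b n\<bar> \<le> \<epsilon> / 3" "\<bar>L - L'\<bar> \<le> \<epsilon> / 3"
    using assms[of "\<epsilon> / 3"] by auto
  have "eventually (\<lambda>n. dist (b n) L' < \<epsilon> / 3) sequentially"
    using b(1) \<open>\<epsilon> > 0\<close> by (intro tendstoD) auto
  then show "eventually (\<lambda>n. dist (a n) L < \<epsilon>) sequentially"
  proof eventually_elim
    case (elim n)
    have "\<bar>a n - L\<bar> \<le> \<bar>a n - b n\<bar> + \<bar>b n - L'\<bar> + \<bar>L - L'\<bar>"
      using abs_triangle_ineq[of "a n - b n" "b n - L'"] abs_triangle_ineq[of "a n - L'" "L' - L"]
      by (simp add: abs_minus_commute)
    then show ?case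
      using elim b(2)[of n] b(3) by (simp add: dist_real_def)
  qed
qed

section \<open>Block means and polynomials with rational coefficients\<close>

lemma card_blockA [simp]: "card (blockA n) = n"
  by (simp add: blockA_def)

lemma finite_blockA [simp]: "finite (blockA n)"
  by (simp add: blockA_def)

lemma blockA_subset_range:
  assumes "j \<le> Q"
  shows "blockA (2^j * n) \<subseteq> {n..<2^(Q+1) * n}"
proof -
  have "n \<le> 2^j * n"
    by simp
  moreover have "2^(j+1) * n \<le> 2^(Q+1) * n"
    using assms by (intro mult_right_mono power_increasing) auto
  ultimately show ?thesis
    by (auto simp: blockA_def)
qed

lemma blockAq_subset_range: "blockAq n Q \<subseteq> {n..<2^(Q+1) * n}"
  unfolding blockAq_def by (intro UN_least blockA_subset_range) simp

definition block_mean :: "(nat \<Rightarrow> real) \<Rightarrow> nat \<Rightarrow> real" where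
  "block_mean y n = (1 / real (card (blockA n))) * (\<Sum>k\<in>blockA n. y k)"

lemma abs_block_mean_diff_le:
  assumes "\<And>k. k \<in> blockA n \<Longrightarrow> \<bar>y k - z k\<bar> \<le> \<eta>" and "\<eta> \<ge> 0"
  shows "\<bar>block_mean y n - block_mean z n\<bar> \<le> \<eta>"
proof (cases "n = 0")
  case False
  have "\<bar>(\<Sum>k\<in>blockA n. y k) - (\<Sum>k\<in>blockA n. z k)\<bar> \<le> (\<Sum>k\<in>blockA n. \<bar>y k - z k\<bar>)"
    unfolding sum_subtractf[symmetric] by (rule sum_abs)
  also have "\<dots> \<le> (\<Sum>k\<in>blockA n. \<eta>)"
    using assms(1) by (rule sum_mono)
  also have "\<dots> = real n * \<eta>"
    by simp
  finally have bound: "\<bar>(\<Sum>k\<in>blockA n. y k) - (\<Sum>k\<in>blockA n. z k)\<bar> \<le> real n * \<eta>" .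
  have "block_mean y n - block_mean z n = ((\<Sum>k\<in>blockA n. y k) - (\<Sum>k\<in>blockA n. z k)) / real n"
    by (simp add: block_mean_def diff_divide_distrib)
  then show ?thesis
    using False bound by (simp add: pos_divide_le_eq mult.commute)
qed (use assms(2) in \<open>simp add: block_mean_def\<close>)

(* Coefficient lists form a countable type, so an almost sure statement can quantify over all
   of these polynomials at once. *)
definition rat_poly :: "rat list \<Rightarrow> real \<Rightarrow> real" where
  "rat_poly rs x = (\<Sum>i<length rs. real_of_rat (rs ! i) * x^i)"

lemma borel_measurable_rat_poly [measurable]: "rat_poly rs \<in> borel_measurable borel"
  unfolding rat_poly_def by measurable

lemma abs_rat_poly_le:
  assumes "x \<in> {0..1}"
  shows "\<bar>rat_poly rs x\<bar> \<le> (\<Sum>i<length rs. \<bar>real_of_rat (rs ! i)\<bar>)"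
proof -
  have "\<bar>x^i\<bar> \<le> 1" for i
    using assms by (simp add: power_le_one)
  then have "\<bar>real_of_rat (rs ! i) * x^i\<bar> \<le> \<bar>real_of_rat (rs ! i)\<bar>" for i
    by (simp add: abs_mult mult_left_le)
  then have "(\<Sum>i<length rs. \<bar>real_of_rat (rs ! i) * x^i\<bar>) \<le> (\<Sum>i<length rs. \<bar>real_of_rat (rs ! i)\<bar>)"
    by (rule sum_mono)
  with sum_abs show ?thesis
    unfolding rat_poly_def by (rule order_trans)
qed

lemma rat_poly_uniform_approx:
  assumes "continuous_on {0..1} f" and "\<epsilon> > 0"
  obtains rs where "\<And>x. x \<in> {0..1} \<Longrightarrow> \<bar>f x - rat_poly rs x\<bar> \<le> \<epsilon>"
proof -
  obtain g where g: "polynomial_function g" "\<And>x. x \<in> {0..1} \<Longrightarrow> \<bar>f x - g x\<bar> < \<epsilon> / 2"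
    using Stone_Weierstrass_polynomial_function[OF compact_Icc assms(1), of "\<epsilon> / 2"] assms(2) by auto
  then obtain a N where g_eq: "g = (\<lambda>x. \<Sum>i\<le>N. a i * x^i)"
    by (auto simp: real_polynomial_function_eq[symmetric] real_polynomial_function_iff_sum)
  define \<eta> where "\<eta> = \<epsilon> / (2 * (real N + 1))"
  have "\<eta> > 0"
    using assms(2) by (simp add: \<eta>_def)
  have "\<exists>r::rat. \<bar>a i - real_of_rat r\<bar> < \<eta>" for i
  proof -
    obtain r where "r \<in> \<rat>" "a i - \<eta> < r" "r < a i + \<eta>"
      using Rats_dense_in_real[of "a i - \<eta>" "a i + \<eta>"] \<open>\<eta> > 0\<close> by auto
    then show ?thesis
      by (metis Rats_cases abs_diff_less_iff add.commute diff_less_eq less_diff_eq)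
  qed
  then obtain R where R: "\<And>i. \<bar>a i - real_of_rat (R i)\<bar> < \<eta>"
    by metis
  define rs where "rs = map R [0..<Suc N]"
  have rat_poly_rs: "rat_poly rs x = (\<Sum>i\<le>N. real_of_rat (R i) * x^i)" for x
    unfolding rat_poly_def rs_def lessThan_Suc_atMost[symmetric]
    by (intro sum.cong) (auto simp del: upt_Suc)
  show ?thesis
  proof
    fix x :: real assume x: "x \<in> {0..1}"
    have "g x - rat_poly rs x = (\<Sum>i\<le>N. (a i - real_of_rat (R i)) * x^i)"
      unfolding g_eq rat_poly_rs by (simp add: sum_subtractf left_diff_distrib)
    then have "\<bar>g x - rat_poly rs x\<bar> \<le> (\<Sum>i\<le>N. \<bar>(a i - real_of_rat (R i)) * x^i\<bar>)"
      by (simp only: sum_abs)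
    also have "\<dots> \<le> (\<Sum>i\<le>N. \<eta>)"
    proof (intro sum_mono)
      fix i
      have "\<bar>x^i\<bar> \<le> 1"
        using x by (simp add: power_le_one)
      then show "\<bar>(a i - real_of_rat (R i)) * x^i\<bar> \<le> \<eta>"
        using R[of i] by (simp add: abs_mult) (smt (verit) mult_left_le abs_ge_zero)
    qed
    also have "\<dots> = \<epsilon> / 2"
      by (simp add: \<eta>_def field_simps)
    finally show "\<bar>f x - rat_poly rs x\<bar> \<le> \<epsilon>"
      using g(2)[OF x] by linarith
  qed
qed

section \<open>Dyadic cells and the logarithmic energy of close pairs\<close>

definition dyadic_cell :: "nat \<Rightarrow> int \<Rightarrow> real set" where
  "dyadic_cell m d = {real_of_int d / 2^m ..< (real_of_int d + 1) / 2^m}"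

lemma dyadic_cell_borel [measurable]: "dyadic_cell m d \<in> sets borel"
  by (simp add: dyadic_cell_def)

lemma mem_dyadic_cell_iff:
  "z \<in> dyadic_cell m d \<longleftrightarrow> real_of_int d \<le> z * 2^m \<and> z * 2^m < real_of_int d + 1"
  by (simp add: dyadic_cell_def pos_divide_le_eq pos_less_divide_eq)

lemma measure_dyadic_cell: "measure lborel (dyadic_cell m d) = 1 / 2^m"
  by (simp add: dyadic_cell_def field_simps)

lemma dyadic_cell_disjoint_unit_interval:
  assumes "d \<notin> {0..2^m}"
  shows "dyadic_cell m d \<inter> {0..1} = {}"
proof (rule ccontr)
  assume "dyadic_cell m d \<inter> {0..1} \<noteq> {}"
  then obtain z where z: "z \<in> dyadic_cell m d" "0 \<le> z" "z \<le> 1"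
    by auto
  have "0 \<le> z * 2^m" "z * 2^m \<le> 2^m"
    using z by simp_all
  then have "real_of_int d \<le> 2^m" and "0 < real_of_int d + 1"
    using z(1) unfolding mem_dyadic_cell_iff by linarith+
  then have "real_of_int d \<le> real_of_int (2^m)" and "real_of_int 0 < real_of_int (d + 1)"
    by (simp_all only: of_int_power of_int_numeral of_int_0 of_int_add of_int_1)
  then have "d \<le> 2^m" and "0 < d + 1"
    by (simp_all only: of_int_le_iff of_int_less_iff)
  then show False
    using assms by simp
qed

lemma dyadic_indices_subset: "{(m, d). 16^m \<le> n \<and> d \<in> {0..2^m}} \<subseteq> {0..n} \<times> {0..int n}"
proof clarify
  fix m :: nat and d :: int
  assume md: "16^m \<le> n" "d \<in> {0..2^m}"
  have "m < 2^m"
    by (rule less_exp)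
  also have "(2::nat)^m \<le> 16^m"
    by (rule power_mono) auto
  finally have "m \<le> n"
    using md(1) by linarith
  have "(2::int)^m \<le> 16^m"
    by (rule power_mono) auto
  also have "(16::int)^m \<le> int n"
    using md(1) by (simp flip: of_nat_le_iff)
  finally have "(2::int)^m \<le> int n" .
  moreover have "d \<le> 2^m"
    using md(2) by simp
  ultimately have "d \<le> int n"
    by (rule order_trans[rotated])
  then show "m \<in> {0..n} \<and> d \<in> {0..int n}"
    using md(2) \<open>m \<le> n\<close> by simp
qed

lemma
  shows finite_dyadic_indices: "finite {(m, d). 16^m \<le> n \<and> d \<in> {0..(2::int)^m}}"
    and card_dyadic_indices_le: "real (card {(m, d). 16^m \<le> n \<and> d \<in> {0..(2::int)^m}}) \<le> (real n + 1)^2"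
proof -
  show "finite {(m, d). 16^m \<le> n \<and> d \<in> {0..(2::int)^m}}"
    by (rule finite_subset[OF dyadic_indices_subset]) simp
  have "card {(m, d). 16^m \<le> n \<and> d \<in> {0..(2::int)^m}} \<le> card ({0..n} \<times> {0..int n})"
    by (rule card_mono[OF _ dyadic_indices_subset]) simp
  also have "\<dots> = (n + 1) * (n + 1)"
  proof -
    have "nat (int n + 1) = n + 1"
      by simp
    then show ?thesis
      by (simp add: card_cartesian_product)
  qed
  finally have "real (card {(m, d). 16^m \<le> n \<and> d \<in> {0..(2::int)^m}}) \<le> real ((n + 1) * (n + 1))"
    by (simp only: of_nat_le_iff)
  then show "real (card {(m, d). 16^m \<le> n \<and> d \<in> {0..(2::int)^m}}) \<le> (real n + 1)^2"
    by (simp add: power2_eq_square algebra_simps)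
qed

lemma summable_square_mult_exp_neg_sqrt: "summable (\<lambda>n::nat. (real n + 1)^2 * exp (-2 * sqrt (real n)))"
proof (rule summable_comparison_test_bigo)
  show "summable (\<lambda>n. norm (inverse (real n ^ 2)))"
    by (simp add: inverse_power_summable)
  show "(\<lambda>n. (real n + 1)^2 * exp (-2 * sqrt (real n))) \<in> O(\<lambda>n. inverse (real n ^ 2))"
    by real_asymp
qed

(* Only cells of side at least n^(-1/4) are controlled: for them Hoeffding's bound
   exp (-2 n 4^-m) <= exp (-2 sqrt n) stays summable after a union over the O(n^2) cells. *)
definition cell_counts_bounded :: "real \<Rightarrow> (nat \<Rightarrow> real) \<Rightarrow> nat \<Rightarrow> bool" where
  "cell_counts_bounded K x n \<longleftrightarrow>
     (\<forall>m d. 16^m \<le> n \<longrightarrow> real (card {j\<in>blockA n. x j \<in> dyadic_cell m d}) \<le> K * real n / 2^m)"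

lemma card_near_le:
  assumes cells: "cell_counts_bounded K x N" and m: "16^m \<le> N"
  shows "real (card {j\<in>blockA N. \<bar>x j - y\<bar> < 1 / 2^m}) \<le> 3 * K * real N / 2^m"
proof -
  define d where "d = \<lfloor>y * 2^m\<rfloor>"
  define in_cell where "in_cell e = {j\<in>blockA N. x j \<in> dyadic_cell m e}" for e
  have "{j\<in>blockA N. \<bar>x j - y\<bar> < 1 / 2^m} \<subseteq> in_cell (d - 1) \<union> in_cell d \<union> in_cell (d + 1)"
  proof
    fix j assume j: "j \<in> {j\<in>blockA N. \<bar>x j - y\<bar> < 1 / 2^m}"
    then have "\<bar>x j - y\<bar> * 2^m < 1"
      by (simp add: pos_less_divide_eq)
    then have "\<bar>x j * 2^m - y * 2^m\<bar> < 1"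
      by (simp add: abs_mult flip: left_diff_distrib)
    moreover have "real_of_int d \<le> y * 2^m" "y * 2^m < real_of_int d + 1"
      unfolding d_def by linarith+
    ultimately have "x j \<in> dyadic_cell m (d - 1) \<or> x j \<in> dyadic_cell m d \<or> x j \<in> dyadic_cell m (d + 1)"
      unfolding mem_dyadic_cell_iff by linarith
    then show "j \<in> in_cell (d - 1) \<union> in_cell d \<union> in_cell (d + 1)"
      using j by (auto simp: in_cell_def)
  qed
  then have "card {j\<in>blockA N. \<bar>x j - y\<bar> < 1 / 2^m} \<le> card (in_cell (d - 1) \<union> in_cell d \<union> in_cell (d + 1))"
    by (intro card_mono) (auto simp: in_cell_def)
  also have "\<dots> \<le> card (in_cell (d - 1)) + card (in_cell d) + card (in_cell (d + 1))"
    using card_Un_le[of "in_cell (d - 1) \<union> in_cell d" "in_cell (d + 1)"]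
      card_Un_le[of "in_cell (d - 1)" "in_cell d"] by linarith
  finally have "real (card {j\<in>blockA N. \<bar>x j - y\<bar> < 1 / 2^m})
      \<le> real (card (in_cell (d - 1))) + real (card (in_cell d)) + real (card (in_cell (d + 1)))"
    by linarith
  also have "\<dots> \<le> K * real N / 2^m + K * real N / 2^m + K * real N / 2^m"
    using cells m unfolding cell_counts_bounded_def in_cell_def by (intro add_mono) auto
  finally show ?thesis
    by simp
qed

lemma card_near_pairs_le:
  assumes "cell_counts_bounded K x N2" and "16^m \<le> N2"
  shows "real (card {(i,j). i \<in> blockA N1 \<and> j \<in> blockA N2 \<and> \<bar>x i - x j\<bar> < 1 / 2^m})
           \<le> 3 * K * real N1 * real N2 / 2^m"
proof -
  have "{(i,j). i \<in> blockA N1 \<and> j \<in> blockA N2 \<and> \<bar>x i - x j\<bar> < 1 / 2^m}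
      = Sigma (blockA N1) (\<lambda>i. {j\<in>blockA N2. \<bar>x j - x i\<bar> < 1 / 2^m})"
    by (auto simp: abs_minus_commute)
  then have "real (card {(i,j). i \<in> blockA N1 \<and> j \<in> blockA N2 \<and> \<bar>x i - x j\<bar> < 1 / 2^m})
      = (\<Sum>i\<in>blockA N1. real (card {j\<in>blockA N2. \<bar>x j - x i\<bar> < 1 / 2^m}))"
    by simp
  also have "\<dots> \<le> (\<Sum>i\<in>blockA N1. 3 * K * real N2 / 2^m)"
    by (intro sum_mono card_near_le[OF assms])
  finally show ?thesis
    by (simp add: algebra_simps)
qed

definition neg_ln_close_pair_mean :: "(nat \<Rightarrow> real) \<Rightarrow> real \<Rightarrow> nat \<Rightarrow> nat \<Rightarrow> real" where
  "neg_ln_close_pair_mean x \<delta> N1 N2 = (1 / real (card (blockA N1 \<times> blockA N2))) *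
     (\<Sum>(i,j)\<in>{(i,j). i \<in> blockA N1 \<and> j \<in> blockA N2 \<and> i \<noteq> j \<and> \<bar>x i - x j\<bar> < \<delta>}. - ln \<bar>x i - x j\<bar>)"

lemma assumptionA2_iff:
  "assumptionA2 q x \<longleftrightarrow>
     (\<forall>\<epsilon>>0. \<exists>\<delta>>0. \<forall>\<^sub>F n in sequentially. \<forall>n'\<in>{2^j * n | j. j \<le> q n}. \<forall>n''\<in>{2^j * n | j. j \<le> q n}.
        neg_ln_close_pair_mean x \<delta> n' n'' < \<epsilon>)"
  unfolding assumptionA2_def neg_ln_close_pair_mean_def ..

(* Pairs closer than 2^-M are few and contribute at most -ln s each; the others are counted
   layer by layer. *)
lemma neg_ln_close_pair_mean_le:
  fixes x :: "nat \<Rightarrow> real"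
  assumes "K \<ge> 0" "N1 > 0" "N2 > 0" "0 < s" "s \<le> 1"
    and sep: "\<And>i j. i \<in> blockA N1 \<Longrightarrow> j \<in> blockA N2 \<Longrightarrow> i \<noteq> j \<Longrightarrow> s \<le> \<bar>x i - x j\<bar>"
    and cells: "cell_counts_bounded K x N2" and M: "16^M \<le> N2"
  shows "neg_ln_close_pair_mean x (1 / 2^m0) N1 N2 \<le> 3 * K * (- ln s) / 2^M + 3 * K * ln 2 * (real m0 + 2) / 2^m0"
proof -
  define t where "t p = \<bar>x (fst p) - x (snd p)\<bar>" for p
  define P where "P = {(i,j). i \<in> blockA N1 \<and> j \<in> blockA N2 \<and> i \<noteq> j \<and> \<bar>x i - x j\<bar> < 1 / 2^m0}"
  define L where "L = 3 * K * real N1 * real N2"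
  have finite_P: "finite P"
    by (rule finite_subset[of _ "blockA N1 \<times> blockA N2"]) (auto simp: P_def)
  have count: "real (card (P \<inter> {p. t p < 1 / 2^m})) \<le> L / 2^m" if "m \<le> M" for m
  proof -
    let ?near = "{(i,j). i \<in> blockA N1 \<and> j \<in> blockA N2 \<and> \<bar>x i - x j\<bar> < 1 / 2^m}"
    have "card (P \<inter> {p. t p < 1 / 2^m}) \<le> card ?near"
      by (rule card_mono, rule finite_subset[of _ "blockA N1 \<times> blockA N2"]) (auto simp: P_def t_def)
    moreover have "(16::nat)^m \<le> 16^M"
      using that by (intro power_increasing) auto
    then have "real (card ?near) \<le> L / 2^m"
      unfolding L_def by (rule card_near_pairs_le[OF cells order_trans[OF _ M]])
    ultimately show ?thesis
      by (meson of_nat_le_iff order_trans)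
  qed
  have "- ln (t p) \<le> - ln s" if "p \<in> P" for p
  proof -
    have "s \<le> t p"
      using sep that by (auto simp: P_def t_def)
    then show ?thesis
      using \<open>0 < s\<close> by simp
  qed
  then have "(\<Sum>p\<in>P \<inter> {p. t p < 1 / 2^M}. - ln (t p)) \<le> real (card (P \<inter> {p. t p < 1 / 2^M})) * (- ln s)"
    using sum_mono[of "P \<inter> {p. t p < 1 / 2^M}" "\<lambda>p. - ln (t p)" "\<lambda>_. - ln s"] by simp
  also have "\<dots> \<le> L / 2^M * (- ln s)"
    using count[of M] \<open>0 < s\<close> \<open>s \<le> 1\<close> by (intro mult_right_mono) simp_all
  finally have small: "(\<Sum>p\<in>P \<inter> {p. t p < 1 / 2^M}. - ln (t p)) \<le> L / 2^M * (- ln s)" .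
  have large: "(\<Sum>p\<in>P - {p. t p < 1 / 2^M}. - ln (t p)) \<le> ln 2 * L * (real m0 + 2) / 2^m0"
  proof (rule sum_neg_ln_le_dyadic_counts)
    show "finite (P - {p. t p < 1 / 2^M})" "L \<ge> 0"
      using finite_P \<open>K \<ge> 0\<close> by (simp_all add: L_def)
    show "1 / 2^M \<le> t p" "t p < 1 / 2^m0" if "p \<in> P - {p. t p < 1 / 2^M}" for p
      using that by (auto simp: P_def t_def)
    show "real (card {p \<in> P - {p. t p < 1 / 2^M}. t p < 1 / 2^m}) \<le> L / 2^m" if "m < M" for m
    proof -
      have "card {p \<in> P - {p. t p < 1 / 2^M}. t p < 1 / 2^m} \<le> card (P \<inter> {p. t p < 1 / 2^m})"
        using finite_P by (intro card_mono) auto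
      then show ?thesis
        using count[of m] that by linarith
    qed
  qed
  have "(\<Sum>(i,j)\<in>P. - ln \<bar>x i - x j\<bar>)
      = (\<Sum>p\<in>P \<inter> {p. t p < 1 / 2^M}. - ln (t p)) + (\<Sum>p\<in>P - {p. t p < 1 / 2^M}. - ln (t p))"
    unfolding sum.Int_Diff[OF finite_P, symmetric] by (simp add: t_def case_prod_beta)
  also have "\<dots> \<le> L / 2^M * (- ln s) + ln 2 * L * (real m0 + 2) / 2^m0"
    using small large by linarith
  finally have "(1 / (real N1 * real N2)) * (\<Sum>(i,j)\<in>P. - ln \<bar>x i - x j\<bar>)
      \<le> (1 / (real N1 * real N2)) * (L / 2^M * (- ln s) + ln 2 * L * (real m0 + 2) / 2^m0)"
    by (rule mult_left_mono) simp
  also have "\<dots> = 3 * K * (- ln s) / 2^M + 3 * K * ln 2 * (real m0 + 2) / 2^m0"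
    using \<open>N1 > 0\<close> \<open>N2 > 0\<close> by (simp add: L_def field_simps)
  finally show ?thesis
    unfolding neg_ln_close_pair_mean_def P_def by (simp add: card_cartesian_product)
qed

section \<open>Separation and the assumptions (A2) and (A3)\<close>

definition separated :: "(nat \<Rightarrow> real) \<Rightarrow> nat \<Rightarrow> nat \<Rightarrow> bool" where
  "separated x Q n \<longleftrightarrow>
     (\<forall>i\<in>{n..<2^(Q+1) * n}. \<forall>j\<in>{n..<2^(Q+1) * n}. i \<noteq> j \<longrightarrow> 1 / real n ^ 4 \<le> \<bar>x i - x j\<bar>)"

lemma card_range_pairs_le:
  "real (card {(i, j). i \<in> {n..<2^(Q+1) * n} \<and> j \<in> {n..<2^(Q+1) * n} \<and> i \<noteq> j}) \<le> 4^(Q+1) * real n ^ 2"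
proof -
  have "card {(i, j). i \<in> {n..<2^(Q+1) * n} \<and> j \<in> {n..<2^(Q+1) * n} \<and> i \<noteq> j}
      \<le> card ({n..<2^(Q+1) * n} \<times> {n..<2^(Q+1) * n})"
    by (intro card_mono) auto
  also have "\<dots> \<le> (2^(Q+1) * n) * (2^(Q+1) * n)"
    unfolding card_cartesian_product by (intro mult_le_mono) simp_all
  finally have "real (card {(i, j). i \<in> {n..<2^(Q+1) * n} \<and> j \<in> {n..<2^(Q+1) * n} \<and> i \<noteq> j})
      \<le> real ((2^(Q+1) * n) * (2^(Q+1) * n))"
    by (simp only: of_nat_le_iff)
  also have "\<dots> = ((2::real)^(Q+1) * 2^(Q+1)) * real n ^ 2"
    by (simp add: power2_eq_square mult_ac)
  also have "(2::real)^(Q+1) * 2^(Q+1) = 4^(Q+1)"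
    by (simp flip: power_mult_distrib)
  finally show ?thesis .
qed

lemma radius_ratio_le:
  assumes "lam > 0" "n > 0" "separated x Q n"
    and ij: "i \<in> blockAq n Q" "j \<in> blockAq n Q" "i \<noteq> j"
  shows "(exp (- lam * real i) + exp (- lam * real j)) / (2 * \<bar>x i - x j\<bar>) \<le> real n ^ 4 * exp (- lam * real n)"
proof -
  have range: "i \<in> {n..<2^(Q+1) * n}" "j \<in> {n..<2^(Q+1) * n}"
    using ij(1,2) blockAq_subset_range[of n Q] by blast+
  have "exp (- lam * real k) \<le> exp (- lam * real n)" if "n \<le> k" for k
    using that \<open>lam > 0\<close> by simp
  then have "exp (- lam * real i) + exp (- lam * real j) \<le> 2 * exp (- lam * real n)"
    using range by (smt (verit) atLeastLessThan_iff)
  moreover have "1 / real n ^ 4 \<le> \<bar>x i - x j\<bar>"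
    using assms(3) range ij(3) unfolding separated_def by blast
  ultimately have "(exp (- lam * real i) + exp (- lam * real j)) / (2 * \<bar>x i - x j\<bar>)
      \<le> (2 * exp (- lam * real n)) / (2 * (1 / real n ^ 4))"
    using \<open>n > 0\<close> by (intro frac_le) auto
  also have "\<dots> = real n ^ 4 * exp (- lam * real n)"
    using \<open>n > 0\<close> by simp
  finally show ?thesis .
qed

definition dyadic_level :: "nat \<Rightarrow> nat" where
  "dyadic_level n = nat \<lfloor>log 2 (real n) / 4\<rfloor>"

lemma
  assumes "n > 0"
  shows pow16_dyadic_level_le: "16 ^ dyadic_level n \<le> n"
    and real_root4_le_pow2_dyadic_level: "real n powr (1/4) \<le> 2 * 2 ^ dyadic_level n"
proof -
  define r where "r = log 2 (real n) / 4"
  have "r \<ge> 0"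
    using assms by (simp add: r_def)
  then have level: "real (dyadic_level n) \<le> r" "r - 1 < real (dyadic_level n)"
    unfolding dyadic_level_def r_def[symmetric] by linarith+
  have "real (16 ^ dyadic_level n) = 2 powr (4 * real (dyadic_level n))"
    by (simp add: powr_realpow[symmetric] power_mult[symmetric] powr_powr[symmetric])
  also have "\<dots> \<le> 2 powr (4 * r)"
    using level by (intro powr_mono) auto
  also have "\<dots> = real n"
    using assms by (simp add: r_def)
  finally show "16 ^ dyadic_level n \<le> n"
    by linarith
  have "real n powr (1/4) = (2 powr log 2 (real n)) powr (1/4)"
    using assms by simp
  also have "\<dots> = 2 powr r"
    by (simp add: r_def powr_powr)
  also have "\<dots> \<le> 2 powr (real (dyadic_level n) + 1)"
    using level by (intro powr_mono) auto
  also have "\<dots> = 2 * 2 ^ dyadic_level n"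
    by (simp add: powr_add powr_realpow)
  finally show "real n powr (1/4) \<le> 2 * 2 ^ dyadic_level n" .
qed

lemma tendsto_ln_div_pow2_dyadic_level: "(\<lambda>n. ln (real n) / 2 ^ dyadic_level n) \<longlonglongrightarrow> 0"
proof (rule tendsto_sandwich)
  show "eventually (\<lambda>n. 0 \<le> ln (real n) / 2 ^ dyadic_level n) sequentially"
    by (intro eventually_sequentiallyI[of 1]) simp
  show "eventually (\<lambda>n. ln (real n) / 2 ^ dyadic_level n \<le> 2 * (ln (real n) / real n powr (1/4))) sequentially"
  proof (intro eventually_sequentiallyI[of 1])
    fix n :: nat assume "n \<ge> 1"
    then have "1 / 2 ^ dyadic_level n \<le> 2 / real n powr (1/4)"
      using real_root4_le_pow2_dyadic_level[of n] by (simp add: divide_simps)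
    then have "ln (real n) * (1 / 2 ^ dyadic_level n) \<le> ln (real n) * (2 / real n powr (1/4))"
      using \<open>n \<ge> 1\<close> by (intro mult_left_mono) simp_all
    then show "ln (real n) / 2 ^ dyadic_level n \<le> 2 * (ln (real n) / real n powr (1/4))"
      by (simp add: mult.commute)
  qed
  have "(\<lambda>n::nat. ln (real n) / real n powr (1/4)) \<longlonglongrightarrow> 0"
    by real_asymp
  then show "(\<lambda>n. 2 * (ln (real n) / real n powr (1/4))) \<longlonglongrightarrow> 0"
    by (rule tendsto_mult_right_zero)
qed simp

lemma neg_ln_close_pair_mean_le_if_separated:
  assumes "K \<ge> 0" "n > 0" and sep: "separated x Q n" and "a \<le> Q" "b \<le> Q"
    and cells: "cell_counts_bounded K x (2^b * n)"
  shows "neg_ln_close_pair_mean x (1 / 2^m0) (2^a * n) (2^b * n)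
    \<le> 12 * K * (ln (real n) / 2 ^ dyadic_level n) + 3 * K * ln 2 * (real m0 + 2) / 2^m0"
proof -
  have "n \<le> 2^b * n"
    by simp
  then have level: "16 ^ dyadic_level n \<le> 2^b * n"
    using pow16_dyadic_level_le[OF \<open>n > 0\<close>] by linarith
  have "1 / real n ^ 4 \<le> \<bar>x i - x j\<bar>"
    if "i \<in> blockA (2^a * n)" "j \<in> blockA (2^b * n)" "i \<noteq> j" for i j
    using sep that blockA_subset_range[OF \<open>a \<le> Q\<close>, of n] blockA_subset_range[OF \<open>b \<le> Q\<close>, of n]
    unfolding separated_def by blast
  then have "neg_ln_close_pair_mean x (1 / 2^m0) (2^a * n) (2^b * n)
      \<le> 3 * K * (- ln (1 / real n ^ 4)) / 2 ^ dyadic_level n + 3 * K * ln 2 * (real m0 + 2) / 2^m0"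
    using \<open>K \<ge> 0\<close> \<open>n > 0\<close> cells level by (intro neg_ln_close_pair_mean_le) auto
  also have "3 * K * (- ln (1 / real n ^ 4)) / 2 ^ dyadic_level n = 12 * K * (ln (real n) / 2 ^ dyadic_level n)"
    using \<open>n > 0\<close> by (simp add: ln_div ln_realpow)
  finally show ?thesis .
qed

lemma assumptionA2_if_separated:
  assumes "K \<ge> 0"
    and cells: "eventually (cell_counts_bounded K x) sequentially"
    and sep: "eventually (\<lambda>n. separated x (q n) n) sequentially"
  shows "assumptionA2 q x"
  unfolding assumptionA2_iff
proof (intro allI impI)
  fix \<epsilon> :: real assume "\<epsilon> > 0"
  have "(\<lambda>m::nat. 3 * K * ln 2 * ((real m + 2) / 2^m)) \<longlonglongrightarrow> 0"
    by (intro tendsto_mult_right_zero) real_asymp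
  then have "eventually (\<lambda>m. 3 * K * ln 2 * ((real m + 2) / 2^m) < \<epsilon> / 2) sequentially"
    using \<open>\<epsilon> > 0\<close> by (intro order_tendstoD(2)) auto
  then obtain m0 where m0: "3 * K * ln 2 * ((real m0 + 2) / 2^m0) < \<epsilon> / 2"
    unfolding eventually_sequentially by auto
  have "(\<lambda>n. 12 * K * (ln (real n) / 2 ^ dyadic_level n)) \<longlonglongrightarrow> 0"
    by (intro tendsto_mult_right_zero tendsto_ln_div_pow2_dyadic_level)
  then have small: "eventually (\<lambda>n. 12 * K * (ln (real n) / 2 ^ dyadic_level n) < \<epsilon> / 2) sequentially"
    using \<open>\<epsilon> > 0\<close> by (intro order_tendstoD(2)) auto
  obtain N0 where N0: "\<And>n. n \<ge> N0 \<Longrightarrow> cell_counts_bounded K x n"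
    using cells by (auto simp: eventually_sequentially)
  have cells_pow2: "eventually (\<lambda>n. \<forall>j. cell_counts_bounded K x (2^j * n)) sequentially"
  proof (intro eventually_sequentiallyI[of N0] allI N0)
    fix n j :: nat assume "N0 \<le> n"
    moreover have "n \<le> 2^j * n"
      by simp
    ultimately show "N0 \<le> 2^j * n"
      by (rule le_trans)
  qed
  have "\<forall>\<^sub>F n in sequentially. \<forall>n'\<in>{2^j * n | j. j \<le> q n}. \<forall>n''\<in>{2^j * n | j. j \<le> q n}.
      neg_ln_close_pair_mean x (1 / 2^m0) n' n'' < \<epsilon>"
    using eventually_gt_at_top[of 0] sep cells_pow2 small
  proof eventually_elim
    case (elim n)
    show ?case
    proof (intro ballI)
      fix n' n'' assume "n' \<in> {2^j * n | j. j \<le> q n}" "n'' \<in> {2^j * n | j. j \<le> q n}"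
      then obtain a b where "a \<le> q n" "n' = 2^a * n" "b \<le> q n" "n'' = 2^b * n"
        by blast
      then show "neg_ln_close_pair_mean x (1 / 2^m0) n' n'' < \<epsilon>"
        using neg_ln_close_pair_mean_le_if_separated[OF \<open>K \<ge> 0\<close> elim(1,2), of a b m0] elim(3,4) m0
        by simp
    qed
  qed
  then show "\<exists>\<delta>>0. \<forall>\<^sub>F n in sequentially. \<forall>n'\<in>{2^j * n | j. j \<le> q n}. \<forall>n''\<in>{2^j * n | j. j \<le> q n}.
      neg_ln_close_pair_mean x \<delta> n' n'' < \<epsilon>"
    by (intro exI[of _ "1 / 2^m0"]) simp
qed

lemma assumptionA3_if_separated:
  assumes "lam > 0" and sep: "eventually (\<lambda>n. separated x (q n) n) sequentially"
  shows "assumptionA3 q x (\<lambda>k. exp (- lam * real k))"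
  unfolding assumptionA3_def
proof (intro allI impI)
  fix \<epsilon> :: real assume "\<epsilon> > 0"
  have "(\<lambda>n::nat. real n ^ 4 * exp (- lam * real n)) \<longlonglongrightarrow> 0"
    using \<open>lam > 0\<close> by real_asymp
  then have "eventually (\<lambda>n. real n ^ 4 * exp (- lam * real n) < \<epsilon>) sequentially"
    using \<open>\<epsilon> > 0\<close> by (intro order_tendstoD(2))
  then show "eventually (\<lambda>n. \<forall>i\<in>blockAq n (q n). \<forall>j\<in>blockAq n (q n). i \<noteq> j \<longrightarrow>
      (exp (- lam * real i) + exp (- lam * real j)) / (2 * \<bar>x i - x j\<bar>) < \<epsilon>) sequentially"
    using eventually_gt_at_top[of 0] sep
  proof eventually_elim
    case (elim n)
    then show ?case
      using radius_ratio_le[OF \<open>lam > 0\<close> elim(2,3)] by (meson le_less_trans)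
  qed
qed

section \<open>I.i.d. centres with a bounded density\<close>

context prob_space
begin

lemma AE_eventually_if_summable_prob:
  assumes "\<And>n. B n \<in> events" and "summable (\<lambda>n. prob (B n))"
    and "\<And>n \<omega>. \<omega> \<in> space M \<Longrightarrow> \<omega> \<notin> B n \<Longrightarrow> P n \<omega>"
  shows "AE \<omega> in M. eventually (\<lambda>n. P n \<omega>) sequentially"
proof -
  have "AE \<omega> in M. eventually (\<lambda>n. \<omega> \<in> space M - B n) sequentially"
    using assms(1,2) by (intro borel_cantelli_AE1) (auto simp: emeasure_eq_measure)
  then show ?thesis
    by (rule AE_mp[OF _ AE_I2]) (auto elim!: eventually_mono intro: assms(3))
qed

lemma AE_tendsto_if_eventually_near:
  assumes "\<And>m::nat. AE \<omega> in M. eventually (\<lambda>n. \<bar>a n \<omega> - L\<bar> < 1 / (real m + 1)) sequentially"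
  shows "AE \<omega> in M. (\<lambda>n. a n \<omega>) \<longlonglongrightarrow> L"
proof -
  have "AE \<omega> in M. \<forall>m::nat. eventually (\<lambda>n. \<bar>a n \<omega> - L\<bar> < 1 / (real m + 1)) sequentially"
    using assms by (simp add: AE_all_countable)
  then show ?thesis
  proof (rule AE_mp[OF _ AE_I2], intro impI tendstoI)
    fix \<omega> and \<epsilon> :: real
    assume near: "\<forall>m::nat. eventually (\<lambda>n. \<bar>a n \<omega> - L\<bar> < 1 / (real m + 1)) sequentially" and "\<epsilon> > 0"
    then obtain m :: nat where m: "1 / (real m + 1) < \<epsilon>"
      by (metis nat_approx_posE of_nat_Suc add.commute)
    show "eventually (\<lambda>n. dist (a n \<omega>) L < \<epsilon>) sequentially"
      using near[rule_format, of m] by eventually_elim (use m in \<open>simp add: dist_real_def\<close>)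
  qed
qed

end

locale iid_bounded_density = prob_space M for M :: "'a measure" +
  fixes c :: "nat \<Rightarrow> 'a \<Rightarrow> real" and \<rho> :: "real \<Rightarrow> real" and C :: real
  assumes measurable_c [measurable]: "\<And>k. c k \<in> borel_measurable M"
    and indep_c: "indep_vars (\<lambda>_. borel) c UNIV"
    and measurable_rho [measurable]: "\<rho> \<in> borel_measurable borel"
    and rho_nonneg: "\<And>x. \<rho> x \<ge> 0"
    and rho_outside: "\<And>x. x \<notin> {0..1} \<Longrightarrow> \<rho> x = 0"
    and rho_le: "\<And>x. \<rho> x \<le> C"
    and distributed_c: "\<And>k. distributed M lborel (c k) (\<lambda>x. ennreal (\<rho> x))"
begin

lemma bound_nonneg: "C \<ge> 0"
  using rho_nonneg[of 0] rho_le[of 0] by linarith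

lemma emeasure_c_vimage_le:
  assumes "A \<in> sets borel"
  shows "emeasure M (c k -` A \<inter> space M) \<le> ennreal C * emeasure lborel A"
proof -
  have "emeasure M (c k -` A \<inter> space M) = (\<integral>\<^sup>+x. ennreal (\<rho> x) * indicator A x \<partial>lborel)"
    using distributed_emeasure[OF distributed_c[of k]] assms by simp
  also have "\<dots> \<le> (\<integral>\<^sup>+x. ennreal C * indicator A x \<partial>lborel)"
    by (intro nn_integral_mono mult_right_mono) (auto intro: ennreal_leI rho_le)
  also have "\<dots> = ennreal C * emeasure lborel A"
    using assms by (simp add: nn_integral_cmult_indicator)
  finally show ?thesis .
qed

lemma AE_c_in_unit_interval: "AE \<omega> in M. \<forall>k. c k \<omega> \<in> {0..1}"
proof -
  have "AE \<omega> in M. c k \<omega> \<in> {0..1}" for k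
  proof (rule AE_I')
    have "emeasure M (c k -` (- {0..1}) \<inter> space M) = (\<integral>\<^sup>+x. ennreal (\<rho> x) * indicator (- {0..1}) x \<partial>lborel)"
      using distributed_emeasure[OF distributed_c[of k]] by simp
    also have "\<dots> = 0"
      by (simp add: nn_integral_0_iff_AE rho_outside split: split_indicator)
    finally show "c k -` (- {0..1}) \<inter> space M \<in> null_sets M"
      by (auto simp: null_sets_def)
  qed auto
  then show ?thesis
    by (simp add: AE_all_countable)
qed

lemma indep_var_c:
  assumes "i \<noteq> j"
  shows "indep_var borel (c i) borel (c j)"
proof -
  have "indep_var (PiM {i} (\<lambda>_. borel)) (\<lambda>\<omega>. restrict (\<lambda>k. c k \<omega>) {i})
                  (PiM {j} (\<lambda>_. borel)) (\<lambda>\<omega>. restrict (\<lambda>k. c k \<omega>) {j})"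
    using assms by (intro indep_var_restrict[OF indep_c]) auto
  then have "indep_var borel (\<lambda>\<omega>. (\<lambda>f. f i) (restrict (\<lambda>k. c k \<omega>) {i}))
                  borel (\<lambda>\<omega>. (\<lambda>f. f j) (restrict (\<lambda>k. c k \<omega>) {j}))"
    by (rule indep_var_compose[unfolded comp_def]) auto
  then show ?thesis
    by simp
qed

lemma prob_dist_c_less_le:
  assumes "i \<noteq> j" and "s \<ge> 0"
  shows "prob {\<omega>\<in>space M. \<bar>c i \<omega> - c j \<omega>\<bar> < s} \<le> 2 * C * s"
proof -
  let ?Di = "distr M borel (c i)" and ?Dj = "distr M borel (c j)"
  let ?S = "{p::real \<times> real. \<bar>fst p - snd p\<bar> < s}"
  interpret Di: prob_space ?Di
    by (rule prob_space_distr) simp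
  interpret Dj: prob_space ?Dj
    by (rule prob_space_distr) simp
  have "{p \<in> space (borel \<Otimes>\<^sub>M borel). \<bar>fst p - snd p\<bar> < s} \<in> sets (borel \<Otimes>\<^sub>M borel)"
    by measurable
  then have S: "?S \<in> sets (borel \<Otimes>\<^sub>M borel)"
    by (simp add: space_pair_measure)
  have product: "?Di \<Otimes>\<^sub>M ?Dj = distr M (borel \<Otimes>\<^sub>M borel) (\<lambda>\<omega>. (c i \<omega>, c j \<omega>))"
    using indep_var_distribution_eq indep_var_c[OF assms(1)] by auto
  have "emeasure M {\<omega>\<in>space M. \<bar>c i \<omega> - c j \<omega>\<bar> < s}
      = emeasure (distr M (borel \<Otimes>\<^sub>M borel) (\<lambda>\<omega>. (c i \<omega>, c j \<omega>))) ?S"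
    using S by (subst emeasure_distr) (auto intro!: arg_cong[where f="emeasure M"])
  also have "\<dots> = emeasure (?Di \<Otimes>\<^sub>M ?Dj) ?S"
    by (simp add: product)
  also have "\<dots> = (\<integral>\<^sup>+y. emeasure ?Dj (Pair y -` ?S) \<partial>?Di)"
    using S by (intro Dj.emeasure_pair_measure_alt) simp
  also have "\<dots> \<le> (\<integral>\<^sup>+y. ennreal (2 * C * s) \<partial>?Di)"
  proof (intro nn_integral_mono)
    fix y
    have "Pair y -` ?S = {y - s <..< y + s}"
      by auto
    then have "emeasure ?Dj (Pair y -` ?S) = emeasure M (c j -` {y - s <..< y + s} \<inter> space M)"
      by (simp add: emeasure_distr)
    also have "\<dots> \<le> ennreal C * emeasure lborel {y - s <..< y + s}"
      by (rule emeasure_c_vimage_le) simp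
    also have "\<dots> = ennreal (2 * C * s)"
      using assms(2) bound_nonneg by (simp add: ennreal_mult[symmetric] algebra_simps)
    finally show "emeasure ?Dj (Pair y -` ?S) \<le> ennreal (2 * C * s)" .
  qed
  also have "\<dots> = ennreal (2 * C * s)"
    using Di.emeasure_space_1 by simp
  finally show ?thesis
    using assms(2) bound_nonneg by (simp add: emeasure_eq_measure ennreal_le_iff)
qed

lemma prob_some_pair_close_le:
  assumes "finite P" and "\<And>p. p \<in> P \<Longrightarrow> fst p \<noteq> snd p" and "s \<ge> 0"
  shows "prob (\<Union>p\<in>P. {\<omega>\<in>space M. \<bar>c (fst p) \<omega> - c (snd p) \<omega>\<bar> < s}) \<le> 2 * C * s * real (card P)"
proof -
  have "prob (\<Union>p\<in>P. {\<omega>\<in>space M. \<bar>c (fst p) \<omega> - c (snd p) \<omega>\<bar> < s})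
      \<le> (\<Sum>p\<in>P. prob {\<omega>\<in>space M. \<bar>c (fst p) \<omega> - c (snd p) \<omega>\<bar> < s})"
    using assms(1) by (intro finite_measure_subadditive_finite) auto
  also have "\<dots> \<le> (\<Sum>p\<in>P. 2 * C * s)"
    using assms(2,3) by (intro sum_mono prob_dist_c_less_le) auto
  also have "\<dots> = 2 * C * s * real (card P)"
    by simp
  finally show ?thesis .
qed

lemma AE_eventually_separated: "AE \<omega> in M. \<forall>Q. eventually (separated (\<lambda>k. c k \<omega>) Q) sequentially"
proof (subst AE_all_countable, intro allI)
  fix Q :: nat
  define P where "P n = {(i, j). i \<in> {n..<2^(Q+1) * n} \<and> j \<in> {n..<2^(Q+1) * n} \<and> i \<noteq> j}"
    for n :: nat
  define B where "B n = (\<Union>p\<in>P n. {\<omega>\<in>space M. \<bar>c (fst p) \<omega> - c (snd p) \<omega>\<bar> < 1 / real n ^ 4})"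
    for n :: nat
  define K :: real where "K = 2 * C * 4^(Q+1)"
  have finite_P: "finite (P n)" for n
    by (rule finite_subset[of _ "{n..<2^(Q+1) * n} \<times> {n..<2^(Q+1) * n}"]) (auto simp: P_def)
  have card_P: "real (card (P n)) \<le> 4^(Q+1) * real n ^ 2" for n
    unfolding P_def by (rule card_range_pairs_le)
  have prob_B: "prob (B n) \<le> K * inverse (real n ^ 2)" for n
  proof (cases "n = 0")
    case False
    have "prob (B n) \<le> 2 * C * (1 / real n ^ 4) * real (card (P n))"
      unfolding B_def using finite_P by (intro prob_some_pair_close_le) (auto simp: P_def)
    also have "\<dots> \<le> 2 * C * (1 / real n ^ 4) * (4^(Q+1) * real n ^ 2)"
      using card_P[of n] bound_nonneg by (intro mult_left_mono) simp_all
    also have "\<dots> = K * inverse (real n ^ 2)"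
      using False by (simp add: K_def field_simps power2_eq_square power4_eq_xxxx)
    finally show ?thesis .
  qed (simp add: B_def P_def)
  have summable: "summable (\<lambda>n. prob (B n))"
  proof (rule summable_comparison_test)
    show "\<exists>N. \<forall>n\<ge>N. norm (prob (B n)) \<le> K * inverse (real n ^ 2)"
      using prob_B by auto
    show "summable (\<lambda>n. K * inverse (real n ^ 2))"
      by (intro summable_mult inverse_power_summable) simp
  qed
  show "AE \<omega> in M. eventually (separated (\<lambda>k. c k \<omega>) Q) sequentially"
  proof (rule AE_eventually_if_summable_prob[OF _ summable])
    show "B n \<in> events" for n
      unfolding B_def using finite_P by (intro sets.finite_UN) auto
    show "separated (\<lambda>k. c k \<omega>) Q n" if "\<omega> \<in> space M" "\<omega> \<notin> B n" for n \<omega>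
      using that unfolding separated_def B_def P_def by force
  qed
qed

lemma expectation_comp_c:
  assumes [measurable]: "g \<in> borel_measurable borel"
  shows "expectation (\<lambda>\<omega>. g (c k \<omega>)) = (\<integral>x. \<rho> x * g x \<partial>lborel)"
  using distributed_integral[OF distributed_c[of k], of g] rho_nonneg by simp

lemma
  assumes [measurable]: "g \<in> borel_measurable borel"
    and range: "\<And>x. x \<in> {0..1} \<Longrightarrow> g x \<in> {a..b}" and "a < b" "t \<ge> 0" "n > 0"
  shows prob_block_sum_ge_le:
      "prob {\<omega>\<in>space M. (\<Sum>k\<in>blockA n. g (c k \<omega>)) \<ge> real n * (\<integral>x. \<rho> x * g x \<partial>lborel) + real n * t}
         \<le> exp (-2 * real n * t^2 / (b - a)^2)"
    and prob_block_sum_dev_ge_le: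
      "prob {\<omega>\<in>space M. \<bar>(\<Sum>k\<in>blockA n. g (c k \<omega>)) - real n * (\<integral>x. \<rho> x * g x \<partial>lborel)\<bar> \<ge> real n * t}
         \<le> 2 * exp (-2 * real n * t^2 / (b - a)^2)"
proof -
  interpret Hoeffding_ineq M "blockA n" "\<lambda>k \<omega>. g (c k \<omega>)" "\<lambda>_. a" "\<lambda>_. b"
    "real n * (\<integral>x. \<rho> x * g x \<partial>lborel)"
  proof unfold_locales
    show "indep_vars (\<lambda>_. borel) (\<lambda>k \<omega>. g (c k \<omega>)) (blockA n)"
      by (rule indep_vars_compose2[OF indep_vars_subset[OF indep_c]]) auto
    show "AE \<omega> in M. g (c k \<omega>) \<in> {a..b}" for k
      using AE_c_in_unit_interval by eventually_elim (use range in auto)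
  qed (simp_all add: expectation_comp_c)
  have pos: "(\<Sum>k\<in>blockA n. (b - a)\<^sup>2) > 0"
    using \<open>a < b\<close> \<open>n > 0\<close> by simp
  have exponent: "-2 * (real n * t)\<^sup>2 / (\<Sum>k\<in>blockA n. (b - a)\<^sup>2) = -2 * real n * t^2 / (b - a)^2"
    using \<open>n > 0\<close> \<open>a < b\<close> by (simp add: power_mult_distrib divide_simps) (simp add: power2_eq_square)
  show "prob {\<omega>\<in>space M. (\<Sum>k\<in>blockA n. g (c k \<omega>)) \<ge> real n * (\<integral>x. \<rho> x * g x \<partial>lborel) + real n * t}
      \<le> exp (-2 * real n * t^2 / (b - a)^2)"
    using Hoeffding_ineq_ge[of "real n * t", OF _ pos] \<open>t \<ge> 0\<close> unfolding exponent by simp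
  show "prob {\<omega>\<in>space M. \<bar>(\<Sum>k\<in>blockA n. g (c k \<omega>)) - real n * (\<integral>x. \<rho> x * g x \<partial>lborel)\<bar> \<ge> real n * t}
      \<le> 2 * exp (-2 * real n * t^2 / (b - a)^2)"
    using Hoeffding_ineq_abs_ge[of "real n * t", OF _ pos] \<open>t \<ge> 0\<close> unfolding exponent by simp
qed

lemma AE_block_mean_tendsto:
  assumes [measurable]: "g \<in> borel_measurable borel"
    and range: "\<And>x. x \<in> {0..1} \<Longrightarrow> g x \<in> {a..b}" and "a < b"
  shows "AE \<omega> in M. block_mean (\<lambda>k. g (c k \<omega>)) \<longlonglongrightarrow> (\<integral>x. \<rho> x * g x \<partial>lborel)"
proof (rule AE_tendsto_if_eventually_near)
  fix m :: nat
  define E where "E = (\<integral>x. \<rho> x * g x \<partial>lborel)"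
  define t where "t = 1 / (real m + 1)"
  define \<kappa> where "\<kappa> = 2 * t^2 / (b - a)^2"
  \<comment> \<open>n = 0 is put into the exceptional set, so the junk value of block_mean at 0 needs no care.\<close>
  define B where "B n = {\<omega>\<in>space M. n = 0 \<or> real n * t \<le> \<bar>(\<Sum>k\<in>blockA n. g (c k \<omega>)) - real n * E\<bar>}"
    for n
  have "t > 0" "\<kappa> > 0"
    using \<open>a < b\<close> by (simp_all add: t_def \<kappa>_def)
  have prob_B: "prob (B n) \<le> 2 * exp (- \<kappa> * real n)" for n
  proof (cases "n = 0")
    case False
    have "B n = {\<omega>\<in>space M. \<bar>(\<Sum>k\<in>blockA n. g (c k \<omega>)) - real n * E\<bar> \<ge> real n * t}"
      using False by (simp add: B_def)
    moreover have "-2 * real n * t^2 / (b - a)^2 = - \<kappa> * real n"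
      by (simp add: \<kappa>_def)
    ultimately show ?thesis
      using prob_block_sum_dev_ge_le[OF assms(1) range \<open>a < b\<close>, of t n] \<open>t > 0\<close> False
      unfolding E_def by simp
  qed (simp add: B_def prob_space)
  have summable: "summable (\<lambda>n. prob (B n))"
  proof (rule summable_comparison_test)
    show "\<exists>N. \<forall>n\<ge>N. norm (prob (B n)) \<le> 2 * exp (- \<kappa> * real n)"
      using prob_B by simp
    show "summable (\<lambda>n. 2 * exp (- \<kappa> * real n))"
      by (rule summable_mult[OF summable_exp_neg_mult[OF \<open>\<kappa> > 0\<close>]])
  qed
  show "AE \<omega> in M. eventually (\<lambda>n. \<bar>block_mean (\<lambda>k. g (c k \<omega>)) n - E\<bar> < 1 / (real m + 1)) sequentially"
  proof (rule AE_eventually_if_summable_prob[OF _ summable])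
    show "B n \<in> events" for n
      unfolding B_def by measurable
    show "\<bar>block_mean (\<lambda>k. g (c k \<omega>)) n - E\<bar> < 1 / (real m + 1)" if "\<omega> \<in> space M" "\<omega> \<notin> B n" for n \<omega>
    proof -
      have "n > 0" and dev: "\<bar>(\<Sum>k\<in>blockA n. g (c k \<omega>)) - real n * E\<bar> < t * real n"
        using that by (auto simp: B_def mult.commute)
      have "block_mean (\<lambda>k. g (c k \<omega>)) n - E = ((\<Sum>k\<in>blockA n. g (c k \<omega>)) - real n * E) / real n"
        using \<open>n > 0\<close> by (simp add: block_mean_def diff_divide_distrib)
      then show ?thesis
        using dev \<open>n > 0\<close> by (simp add: t_def abs_divide pos_divide_less_eq)
    qed
  qed
qed

lemma AE_block_mean_rat_poly_tendsto:
  "AE \<omega> in M. \<forall>rs. block_mean (\<lambda>k. rat_poly rs (c k \<omega>)) \<longlonglongrightarrow> (\<integral>x. \<rho> x * rat_poly rs x \<partial>lborel)"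
proof (subst AE_all_countable, intro allI)
  fix rs
  define R where "R = (\<Sum>i<length rs. \<bar>real_of_rat (rs ! i)\<bar>)"
  have "R \<ge> 0"
    unfolding R_def by (intro sum_nonneg) simp
  show "AE \<omega> in M. block_mean (\<lambda>k. rat_poly rs (c k \<omega>)) \<longlonglongrightarrow> (\<integral>x. \<rho> x * rat_poly rs x \<partial>lborel)"
  proof (rule AE_block_mean_tendsto)
    show "rat_poly rs x \<in> {- (R + 1)..R + 1}" if "x \<in> {0..1}" for x
      using abs_rat_poly_le[OF that, of rs] unfolding R_def by auto
  qed (use \<open>R \<ge> 0\<close> in simp_all)
qed

lemma
  assumes [measurable]: "g \<in> borel_measurable borel" and bound: "\<And>x. x \<in> {0..1} \<Longrightarrow> \<bar>g x\<bar> \<le> B"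
  shows integrable_rho_mult: "integrable lborel (\<lambda>x. \<rho> x * g x)"
    and abs_integral_rho_mult_le: "\<bar>\<integral>x. \<rho> x * g x \<partial>lborel\<bar> \<le> C * B"
proof -
  have "B \<ge> 0"
    using bound[of 0] by auto
  have dominating: "integrable lborel (\<lambda>x::real. C * B * indicator {0..1} x)"
    by (intro integrable_mult_right integrable_real_indicator) (auto simp: emeasure_lborel_Icc_eq)
  have le: "\<bar>\<rho> x * g x\<bar> \<le> C * B * indicator {0..1} x" for x
  proof (cases "x \<in> {0..1}")
    case True
    then have "\<rho> x * \<bar>g x\<bar> \<le> C * B"
      using bound[of x] rho_le[of x] rho_nonneg[of x] \<open>B \<ge> 0\<close> by (intro mult_mono) auto
    then show ?thesis
      using True rho_nonneg[of x] by (simp add: abs_mult)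
  qed (simp add: rho_outside)
  show integrable: "integrable lborel (\<lambda>x. \<rho> x * g x)"
    by (rule Bochner_Integration.integrable_bound[OF dominating])
      (use le bound_nonneg \<open>B \<ge> 0\<close> in \<open>auto simp: abs_mult\<close>)
  have "\<bar>\<integral>x. \<rho> x * g x \<partial>lborel\<bar> \<le> (\<integral>x. \<bar>\<rho> x * g x\<bar> \<partial>lborel)"
    using integral_norm_bound[of lborel "\<lambda>x. \<rho> x * g x"] by simp
  also have "\<dots> \<le> (\<integral>x. C * B * indicator {0..1::real} x \<partial>lborel)"
    by (intro integral_mono integrable dominating integrable_abs le)
  also have "\<dots> = C * B"
    by simp
  finally show "\<bar>\<integral>x. \<rho> x * g x \<partial>lborel\<bar> \<le> C * B" .
qed

lemma tendsto_block_mean_integral_if_rat_poly_means: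
  assumes unit: "\<And>k. x k \<in> {0..1}"
    and means: "\<And>rs. block_mean (\<lambda>k. rat_poly rs (x k)) \<longlonglongrightarrow> (\<integral>y. \<rho> y * rat_poly rs y \<partial>lborel)"
    and F_cont: "continuous_on UNIV F"
  shows "block_mean (\<lambda>k. F (x k)) \<longlonglongrightarrow> (\<integral>y. \<rho> y * F y \<partial>lborel)"
proof (rule tendsto_if_uniformly_approximable)
  fix \<eta> :: real assume "\<eta> > 0"
  have F_measurable [measurable]: "F \<in> borel_measurable borel"
    using F_cont by (rule borel_measurable_continuous_onI)
  have "\<eta> / (C + 1) > 0"
    using \<open>\<eta> > 0\<close> bound_nonneg by simp
  then obtain rs where rs: "\<And>y. y \<in> {0..1} \<Longrightarrow> \<bar>F y - rat_poly rs y\<bar> \<le> \<eta> / (C + 1)"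
    using rat_poly_uniform_approx[OF continuous_on_subset[OF F_cont]] by blast
  have "\<eta> / (C + 1) \<le> \<eta>" and "C * (\<eta> / (C + 1)) \<le> \<eta>"
    using \<open>\<eta> > 0\<close> bound_nonneg by (simp_all add: divide_simps)
  then have "\<bar>F (x k) - rat_poly rs (x k)\<bar> \<le> \<eta>" for k
    using rs[OF unit[of k]] by linarith
  then have close_means:
      "\<bar>block_mean (\<lambda>k. F (x k)) n - block_mean (\<lambda>k. rat_poly rs (x k)) n\<bar> \<le> \<eta>" for n
    by (rule abs_block_mean_diff_le) (use \<open>\<eta> > 0\<close> in simp)
  have "compact (F ` {0..1})"
    by (intro compact_continuous_image continuous_on_subset[OF F_cont]) auto
  then obtain BF where BF: "\<And>y. y \<in> {0..1} \<Longrightarrow> \<bar>F y\<bar> \<le> BF"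
    by (metis bounded_iff compact_imp_bounded image_eqI real_norm_def)
  have "integrable lborel (\<lambda>y. \<rho> y * F y)"
    by (rule integrable_rho_mult[OF F_measurable BF])
  moreover have "integrable lborel (\<lambda>y. \<rho> y * rat_poly rs y)"
    by (rule integrable_rho_mult[OF borel_measurable_rat_poly abs_rat_poly_le])
  ultimately have "(\<integral>y. \<rho> y * F y \<partial>lborel) - (\<integral>y. \<rho> y * rat_poly rs y \<partial>lborel)
      = (\<integral>y. \<rho> y * (F y - rat_poly rs y) \<partial>lborel)"
    by (simp add: right_diff_distrib)
  also have "\<bar>\<dots>\<bar> \<le> C * (\<eta> / (C + 1))"
    by (rule abs_integral_rho_mult_le[OF _ rs]) measurable
  finally have close_integrals:
      "\<bar>(\<integral>y. \<rho> y * F y \<partial>lborel) - (\<integral>y. \<rho> y * rat_poly rs y \<partial>lborel)\<bar> \<le> \<eta>"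
    using \<open>C * (\<eta> / (C + 1)) \<le> \<eta>\<close> by linarith
  show "\<exists>b L'. b \<longlonglongrightarrow> L' \<and> (\<forall>n. \<bar>block_mean (\<lambda>k. F (x k)) n - b n\<bar> \<le> \<eta>)
      \<and> \<bar>(\<integral>y. \<rho> y * F y \<partial>lborel) - L'\<bar> \<le> \<eta>"
    by (intro exI[of _ "block_mean (\<lambda>k. rat_poly rs (x k))"]
        exI[of _ "\<integral>y. \<rho> y * rat_poly rs y \<partial>lborel"] conjI allI means close_means close_integrals)
qed

lemma assumptionA1_if_rat_poly_means:
  assumes unit: "\<And>k. x k \<in> {0..1}"
    and means: "\<And>rs. block_mean (\<lambda>k. rat_poly rs (x k)) \<longlonglongrightarrow> (\<integral>y. \<rho> y * rat_poly rs y \<partial>lborel)"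
    and pos: "AE y in lborel. y \<in> {0..1} \<longrightarrow> \<rho> y > 0"
  shows "assumptionA1 x"
  unfolding assumptionA1_def
proof (intro exI[of _ \<rho>] conjI allI impI)
  show "AE y in lborel. y \<in> {0..1} \<longrightarrow> 0 < \<rho> y"
    by (rule pos)
  have "integrable lborel (\<lambda>y. \<rho> y * indicator {0..1} y)"
    by (rule integrable_rho_mult[where B=1]) (auto split: split_indicator)
  then show "set_integrable lborel {0..1} \<rho>"
    unfolding set_integrable_def by (simp add: mult.commute)
  fix f :: "real \<Rightarrow> real" assume f: "continuous_on {0..1} f"
  define F where "F y = f (max 0 (min 1 y))" for y
  have F_eq: "F y = f y" if "y \<in> {0..1}" for y
    using that by (simp add: F_def)
  have "continuous_on UNIV (\<lambda>y::real. max 0 (min 1 y))"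
    by (intro continuous_intros)
  then have "continuous_on UNIV F"
    unfolding F_def by (rule continuous_on_compose2[OF f]) auto
  then have "block_mean (\<lambda>k. F (x k)) \<longlonglongrightarrow> (\<integral>y. \<rho> y * F y \<partial>lborel)"
    by (rule tendsto_block_mean_integral_if_rat_poly_means[OF unit means])
  moreover have "block_mean (\<lambda>k. F (x k)) = (\<lambda>n. 1 / real (card (blockA n)) * (\<Sum>k\<in>blockA n. f (x k)))"
    unfolding block_mean_def using unit by (simp add: F_eq)
  moreover have "(\<lambda>y. \<rho> y * F y) = (\<lambda>y. indicator {0..1} y *\<^sub>R (f y * \<rho> y))"
  proof
    show "\<rho> y * F y = indicator {0..1} y *\<^sub>R (f y * \<rho> y)" for y
      by (cases "y \<in> {0..1}") (simp_all add: F_eq rho_outside)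
  qed
  ultimately show "(\<lambda>n. 1 / real (card (blockA n)) * (\<Sum>k\<in>blockA n. f (x k)))
      \<longlonglongrightarrow> (LINT y:{0..1}|lborel. f y * \<rho> y)"
    unfolding set_lebesgue_integral_def by (simp only:)
qed

lemma integral_rho_dyadic_cell_le: "(\<integral>x. \<rho> x * indicator (dyadic_cell m d) x \<partial>lborel) \<le> C / 2^m"
proof -
  have "real_of_int d / 2^m \<le> (real_of_int d + 1) / 2^m"
    by (simp add: divide_right_mono)
  then have "integrable lborel (\<lambda>x. C * indicator (dyadic_cell m d) x)"
    by (intro integrable_mult_right integrable_real_indicator) (auto simp: dyadic_cell_def)
  moreover have "integrable lborel (\<lambda>x. \<rho> x * indicator (dyadic_cell m d) x)"
    by (rule integrable_rho_mult[where B=1]) (auto split: split_indicator)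
  ultimately have "(\<integral>x. \<rho> x * indicator (dyadic_cell m d) x \<partial>lborel)
      \<le> (\<integral>x. C * indicator (dyadic_cell m d) x \<partial>lborel)"
    by (intro integral_mono) (auto simp: rho_le split: split_indicator)
  also have "\<dots> = C / 2^m"
    using measure_dyadic_cell[of m d] by simp
  finally show ?thesis .
qed

lemma prob_cell_count_large_le:
  assumes "16^m \<le> n"
  shows "prob {\<omega>\<in>space M. (\<Sum>k\<in>blockA n. indicator (dyadic_cell m d) (c k \<omega>))
      \<ge> real n * (\<integral>x. \<rho> x * indicator (dyadic_cell m d) x \<partial>lborel) + real n * (1 / 2^m)}
    \<le> exp (-2 * sqrt (real n))"
proof -
  have "(1::nat) \<le> 16^m"
    by simp
  then have "n > 0"
    using assms by linarith
  have "prob {\<omega>\<in>space M. (\<Sum>k\<in>blockA n. indicator (dyadic_cell m d) (c k \<omega>))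
      \<ge> real n * (\<integral>x. \<rho> x * indicator (dyadic_cell m d) x \<partial>lborel) + real n * (1 / 2^m)}
    \<le> exp (-2 * real n * (1 / 2^m)^2 / (1 - 0)^2)"
    by (rule prob_block_sum_ge_le) (use \<open>n > 0\<close> in \<open>auto split: split_indicator\<close>)
  also have "\<dots> \<le> exp (-2 * sqrt (real n))"
  proof -
    have "((4::real)^m)^2 = real ((16::nat)^m)"
      by (simp add: power2_eq_square flip: power_mult_distrib)
    then have "(4::real)^m \<le> sqrt (real n)"
      using assms by (metis of_nat_le_iff real_le_rsqrt)
    then have "sqrt (real n) * 4^m \<le> sqrt (real n) * sqrt (real n)"
      by (intro mult_left_mono) auto
    then have "sqrt (real n) \<le> real n / 4^m"
      by (simp add: pos_le_divide_eq)
    also have "\<dots> = real n * (1 / 2^m)^2"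
      by (simp add: power_divide power2_eq_square flip: power_mult_distrib)
    finally show ?thesis
      by simp
  qed
  finally show ?thesis .
qed

lemma AE_eventually_cell_counts_le:
  "AE \<omega> in M. eventually (\<lambda>n. \<forall>(m, d)\<in>{(m, d). 16^m \<le> n \<and> d \<in> {0..(2::int)^m}}.
      real (card {j\<in>blockA n. c j \<omega> \<in> dyadic_cell m d}) \<le> (C + 1) * real n / 2^m) sequentially"
proof -
  define S where "S n = {(m, d). 16^m \<le> n \<and> d \<in> {0..(2::int)^m}}" for n :: nat
  define E where "E n p = {\<omega>\<in>space M. (\<Sum>k\<in>blockA n. indicator (dyadic_cell (fst p) (snd p)) (c k \<omega>))
      \<ge> real n * (\<integral>x. \<rho> x * indicator (dyadic_cell (fst p) (snd p)) x \<partial>lborel) + real n * (1 / 2^fst p)}"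
    for n :: nat and p :: "nat \<times> int"
  have E_events: "E n p \<in> events" for n p
    unfolding E_def by measurable
  have prob_B: "prob (\<Union>p\<in>S n. E n p) \<le> (real n + 1)^2 * exp (-2 * sqrt (real n))" for n
  proof -
    have "prob (\<Union>p\<in>S n. E n p) \<le> (\<Sum>p\<in>S n. prob (E n p))"
      unfolding S_def using finite_dyadic_indices E_events by (intro finite_measure_subadditive_finite) auto
    also have "\<dots> \<le> (\<Sum>p\<in>S n. exp (-2 * sqrt (real n)))"
    proof (rule sum_mono)
      show "prob (E n p) \<le> exp (-2 * sqrt (real n))" if "p \<in> S n" for p
        unfolding E_def by (rule prob_cell_count_large_le) (use that in \<open>auto simp: S_def\<close>)
    qed
    also have "\<dots> \<le> (real n + 1)^2 * exp (-2 * sqrt (real n))"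
      using card_dyadic_indices_le[of n] by (simp add: S_def mult_right_mono)
    finally show ?thesis .
  qed
  have summable: "summable (\<lambda>n. prob (\<Union>p\<in>S n. E n p))"
  proof (rule summable_comparison_test[OF _ summable_square_mult_exp_neg_sqrt])
    show "\<exists>N. \<forall>n\<ge>N. norm (prob (\<Union>p\<in>S n. E n p)) \<le> (real n + 1)^2 * exp (-2 * sqrt (real n))"
      using prob_B by simp
  qed
  show ?thesis
    unfolding S_def[symmetric]
  proof (rule AE_eventually_if_summable_prob[OF _ summable])
    show "(\<Union>p\<in>S n. E n p) \<in> events" for n
      unfolding S_def using finite_dyadic_indices E_events by (intro sets.finite_UN) auto
    show "\<forall>(m, d)\<in>S n. real (card {j\<in>blockA n. c j \<omega> \<in> dyadic_cell m d}) \<le> (C + 1) * real n / 2^m"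
      if "\<omega> \<in> space M" "\<omega> \<notin> (\<Union>p\<in>S n. E n p)" for n \<omega>
    proof clarify
      fix m d assume "(m, d) \<in> S n"
      then have "\<omega> \<notin> E n (m, d)"
        using that(2) by blast
      then have "(\<Sum>k\<in>blockA n. indicator (dyadic_cell m d) (c k \<omega>))
          < real n * (\<integral>x. \<rho> x * indicator (dyadic_cell m d) x \<partial>lborel) + real n * (1 / 2^m)"
        using that(1) by (simp add: E_def not_le)
      also have "\<dots> \<le> real n * (C / 2^m) + real n * (1 / 2^m)"
        using integral_rho_dyadic_cell_le[of m d] by (intro add_right_mono mult_left_mono) auto
      finally have "(\<Sum>k\<in>blockA n. indicator (dyadic_cell m d) (c k \<omega>)) \<le> (C + 1) * real n / 2^m"
        by (simp add: field_simps)
      moreover have "real (card {j\<in>blockA n. c j \<omega> \<in> dyadic_cell m d})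
          = (\<Sum>k\<in>blockA n. indicator (dyadic_cell m d) (c k \<omega>))"
        by (simp add: indicator_def sum.If_cases Int_def)
      ultimately show "real (card {j\<in>blockA n. c j \<omega> \<in> dyadic_cell m d}) \<le> (C + 1) * real n / 2^m"
        by simp
    qed
  qed
qed

lemma AE_eventually_cell_counts_bounded:
  "AE \<omega> in M. eventually (cell_counts_bounded (C + 1) (\<lambda>k. c k \<omega>)) sequentially"
  using AE_eventually_cell_counts_le AE_c_in_unit_interval
proof eventually_elim
  case (elim \<omega>)
  from elim(1) show ?case
  proof eventually_elim
    case (elim n)
    show ?case
      unfolding cell_counts_bounded_def
    proof (intro allI impI)
      fix m d assume "16^m \<le> n"
      show "real (card {j\<in>blockA n. c j \<omega> \<in> dyadic_cell m d}) \<le> (C + 1) * real n / 2^m"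
      proof (cases "d \<in> {0..2^m}")
        case True
        then show ?thesis
          using elim \<open>16^m \<le> n\<close> by auto
      next
        case False
        then have empty: "{j\<in>blockA n. c j \<omega> \<in> dyadic_cell m d} = {}"
          using dyadic_cell_disjoint_unit_interval \<open>\<forall>k. c k \<omega> \<in> {0..1}\<close> by blast
        show ?thesis
          unfolding empty using bound_nonneg by simp
      qed
    qed
  qed
qed

theorem AE_assumptions_A1_A2_A3:
  assumes "lam > 0" and "AE x in lborel. x \<in> {0..1} \<longrightarrow> \<rho> x > 0"
  shows "AE \<omega> in M.
           assumptionA1 (\<lambda>k. c k \<omega>) \<and>
           (\<exists>q::nat \<Rightarrow> nat. filterlim q at_top sequentially \<and>
              assumptionA2 q (\<lambda>k. c k \<omega>) \<and>
              assumptionA3 q (\<lambda>k. c k \<omega>) (\<lambda>k. exp (- lam * real k)))"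
  using AE_c_in_unit_interval AE_block_mean_rat_poly_tendsto AE_eventually_cell_counts_bounded
    AE_eventually_separated
proof eventually_elim
  case (elim \<omega>)
  obtain q where q: "filterlim q at_top sequentially"
    and separated: "eventually (\<lambda>n. separated (\<lambda>k. c k \<omega>) (q n) n) sequentially"
    using eventually_sequentially_diagonal[of "separated (\<lambda>k. c k \<omega>)"] elim(4) by blast
  have "C + 1 \<ge> 0"
    using bound_nonneg by simp
  then show ?case
    using q assumptionA1_if_rat_poly_means[of "\<lambda>k. c k \<omega>"] elim(1,2) assms(2)
      assumptionA2_if_separated[OF _ elim(3) separated] assumptionA3_if_separated[OF assms(1) separated]
    by blast
qed

end

theorem theorem1p9:
  fixes M :: "'a measure" and c :: "nat \<Rightarrow> 'a \<Rightarrow> real"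
    and \<rho> :: "real \<Rightarrow> real" and lam :: real
  assumes "prob_space M"
    and "lam > 0"
    and "\<And>k. c k \<in> borel_measurable M"
    and "prob_space.indep_vars M (\<lambda>_. borel) c UNIV"
    and "\<rho> \<in> borel_measurable borel"
    and "\<And>x. \<rho> x \<ge> 0"
    and "\<And>x. x \<notin> {0..1} \<Longrightarrow> \<rho> x = 0"
    and "AE x in lborel. x \<in> {0..1} \<longrightarrow> \<rho> x > 0"
    and "\<exists>C. \<forall>x. \<rho> x \<le> C"
    and "\<And>k. distributed M lborel (c k) (\<lambda>x. ennreal (\<rho> x))"
  shows "AE \<omega> in M.
           assumptionA1 (\<lambda>k. c k \<omega>) \<and>
           (\<exists>q::nat \<Rightarrow> nat. filterlim q at_top sequentially \<and>
              assumptionA2 q (\<lambda>k. c k \<omega>) \<and>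
              assumptionA3 q (\<lambda>k. c k \<omega>) (\<lambda>k. exp (- lam * real k)))"
proof -
  obtain C where "\<And>x. \<rho> x \<le> C"
    using assms(9) by blast
  then interpret iid_bounded_density M c \<rho> C
    using assms(1,3-7,10) by (intro iid_bounded_density.intro iid_bounded_density_axioms.intro)
  show ?thesis
    using assms(2,8) by (rule AE_assumptions_A1_A2_A3)
qed

end
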